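(* Let $0<\alpha<\beta$ and define $T\colon\mathbb R\to\mathbb R$ by $Tx=x-\alpha$ if $x\le\alpha$, $Tx=0$ if $\alpha<x\le\beta$, and $Tx=x-\beta$ if $x>\beta$. Then $T$ is firmly nonexpansive and not affine, $v:=P_{\overline{\operatorname{ran}}(\mathrm{Id}-T)}0=\alpha$, $\operatorname{Fix}(v+T)=\left]-\infty,\alpha\right]$, $\operatorname{Fix}(T_{-v})=\left]-\infty,0\right]$, and for all $n\in\mathbb N$ and $x\in\mathbb R$: $T^nx+nv=x$ if $x\le\alpha$; $=\alpha$ if $\alpha<x\le\beta$; $=x-n(\beta-\alpha)$ if $x>\beta$ and $n\le\lfloor x/\beta\rfloor$; $=\min\{\alpha,x-\lfloor x/\beta\rfloor\beta\}+\lfloor x/\beta\rfloor\alpha$ if $x>\beta$ and $n>\lfloor x/\beta\rfloor$. Consequently, for every $x_0\in\mathbb R$ the sequence $(T^nx_0+nv)_n$ is eventually constant, with limit $x_0$ if $x_0\le\alpha$, $\alpha$ if $\alpha<x_0\le\beta$, and $\min\{\alpha,x_0-\lfloor x_0/\beta\rfloor\beta\}+\alpha\lfloor x_0/\beta\rfloor$ if $x_0>\beta$; and for every $x_0>\beta$ this limit does not belong to $\operatorname{Fix}(v+T)$.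
   Context: $T_{-v}x:=T(x+v)$, $(v+T)x:=v+Tx$, $\operatorname{Fix}$ denotes the fixed point set, and $\overline{\operatorname{ran}}(\mathrm{Id}-T)$ the closure of the range of $\mathrm{Id}-T$. *)

theory Defs
  imports "HOL-Analysis.Analysis"
begin

definition firmly_nonexpansive :: "('a::real_inner \<Rightarrow> 'a) \<Rightarrow> bool" where
  "firmly_nonexpansive T \<longleftrightarrow>
     (\<forall>x y. (norm (T x - T y))\<^sup>2 \<le> (T x - T y) \<bullet> (x - y))"

definition affine_op :: "('a::real_vector \<Rightarrow> 'b::real_vector) \<Rightarrow> bool" where
  "affine_op T \<longleftrightarrow>
     (\<forall>x y (l::real). T (l *\<^sub>R x + (1 - l) *\<^sub>R y) = l *\<^sub>R T x + (1 - l) *\<^sub>R T y)"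

definition Fix :: "('a \<Rightarrow> 'a) \<Rightarrow> 'a set" where
  "Fix T = {x. T x = x}"

definition min_disp :: "('a::euclidean_space \<Rightarrow> 'a) \<Rightarrow> 'a" where
  "min_disp T = closest_point (closure (range (\<lambda>x. x - T x))) 0"

end

theory Submission
  imports Defs
begin

text \<open>Below \<open>\<alpha>\<close> the map shifts by \<open>-\<alpha>\<close> and above \<open>\<beta>\<close> by \<open>-\<beta>\<close>; the middle piece
  \<open>]\<alpha>, \<beta>]\<close> is sent to \<open>0\<close>. So an orbit starting at \<open>x > \<beta>\<close> descends by steps of \<open>\<beta>\<close> for
  \<open>\<lfloor>x/\<beta>\<rfloor>\<close> steps, lands at \<open>y = x - \<lfloor>x/\<beta>\<rfloor>\<beta> \<in> [0, \<beta>[\<close>, and from then on only shifts by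
  \<open>-\<alpha>\<close> (after one more step to \<open>0\<close> if \<open>y > \<alpha>\<close>). Adding \<open>n\<alpha>\<close> therefore freezes the orbit
  after finitely many steps. Monotonicity of both \<open>T\<close> and \<open>Id - T\<close> gives firm
  nonexpansiveness, and \<open>ran(Id - T) = [\<alpha>, \<beta>]\<close> gives \<open>v = \<alpha>\<close>.\<close>

lemma firmly_nonexpansive_real_if_mono:
  fixes T :: "real \<Rightarrow> real"
  assumes "mono T" and "mono (\<lambda>x. x - T x)"
  shows "firmly_nonexpansive T"
  unfolding firmly_nonexpansive_def
proof (intro allI)
  fix x y :: real
  have "0 \<le> (T x - T y) * ((x - T x) - (y - T y))"
  proof (cases "x \<le> y")
    case True
    then show ?thesis
      using assms monoD[OF assms(1) True] monoD[OF assms(2) True]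
      by (intro mult_nonpos_nonpos) auto
  next
    case False
    then have "y \<le> x" by simp
    then show ?thesis
      using monoD[OF assms(1)] monoD[OF assms(2)] by (intro mult_nonneg_nonneg) auto
  qed
  then show "(norm (T x - T y))\<^sup>2 \<le> (T x - T y) \<bullet> (x - y)"
    by (simp add: power2_eq_square algebra_simps)
qed

lemma closest_point_atLeastAtMost_below:
  fixes a b x :: real
  assumes "x \<le> a" and "a \<le> b"
  shows "closest_point {a..b} x = a"
  by (rule closest_point_unique[symmetric]) (use assms in \<open>auto simp: dist_real_def\<close>)

lemma funpow_translate_below:
  fixes T :: "real \<Rightarrow> real"
  assumes "\<And>x. x \<le> a \<Longrightarrow> T x = x - c" and "0 \<le> c" and "y \<le> a"
  shows "(T ^^ n) y = y - real n * c"
proof (induction n)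
  case 0
  then show ?case by simp
next
  case (Suc n)
  have "0 \<le> real n * c"
    using assms(2) by simp
  then have "(T ^^ n) y \<le> a"
    using Suc.IH assms(3) by linarith
  then have "T ((T ^^ n) y) = (T ^^ n) y - c"
    by (rule assms(1))
  then show ?case
    by (simp add: Suc.IH ring_distribs)
qed

lemma funpow_translate_above:
  fixes T :: "real \<Rightarrow> real"
  assumes "\<And>x. c \<le> x \<Longrightarrow> T x = x - c" and "0 \<le> c" and "real n * c \<le> y"
  shows "(T ^^ n) y = y - real n * c"
  using assms(3)
proof (induction n)
  case 0
  then show ?case by simp
next
  case (Suc n)
  then have "real n * c \<le> y" and "c \<le> y - real n * c"
    using assms(2) by (simp_all add: algebra_simps)
  then show ?case
    using Suc.IH assms(1)[of "(T ^^ n) y"] by (simp add: algebra_simps)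
qed

definition clamp_shift :: "real \<Rightarrow> real \<Rightarrow> real \<Rightarrow> real" where
  "clamp_shift \<alpha> \<beta> x = (if x \<le> \<alpha> then x - \<alpha> else if x \<le> \<beta> then 0 else x - \<beta>)"

definition clamp_shift_limit :: "real \<Rightarrow> real \<Rightarrow> real \<Rightarrow> real" where
  "clamp_shift_limit \<alpha> \<beta> x = (if x \<le> \<alpha> then x else if x \<le> \<beta> then \<alpha>
     else min \<alpha> (x - of_int \<lfloor>x / \<beta>\<rfloor> * \<beta>) + \<alpha> * of_int \<lfloor>x / \<beta>\<rfloor>)"

context
  fixes \<alpha> \<beta> :: real
  assumes alpha_pos: "0 < \<alpha>" and alpha_less_beta: "\<alpha> < \<beta>"
begin

private lemma beta_pos: "0 < \<beta>"
  using alpha_pos alpha_less_beta by simp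

lemma clamp_shift_below: "x \<le> \<alpha> \<Longrightarrow> clamp_shift \<alpha> \<beta> x = x - \<alpha>"
  by (simp add: clamp_shift_def)

lemma clamp_shift_middle: "\<alpha> < x \<Longrightarrow> x \<le> \<beta> \<Longrightarrow> clamp_shift \<alpha> \<beta> x = 0"
  by (simp add: clamp_shift_def)

lemma clamp_shift_above: "\<beta> \<le> x \<Longrightarrow> clamp_shift \<alpha> \<beta> x = x - \<beta>"
  using alpha_less_beta by (simp add: clamp_shift_def)

lemma firmly_nonexpansive_clamp_shift: "firmly_nonexpansive (clamp_shift \<alpha> \<beta>)"
  by (rule firmly_nonexpansive_real_if_mono)
    (use alpha_pos alpha_less_beta in \<open>auto simp: mono_def clamp_shift_def\<close>)

lemma not_affine_op_clamp_shift: "\<not> affine_op (clamp_shift \<alpha> \<beta>)"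
proof
  assume "affine_op (clamp_shift \<alpha> \<beta>)"
  then have "clamp_shift \<alpha> \<beta> ((1/2) *\<^sub>R 0 + (1 - 1/2) *\<^sub>R (2*\<beta>))
      = (1/2) *\<^sub>R clamp_shift \<alpha> \<beta> 0 + (1 - 1/2) *\<^sub>R clamp_shift \<alpha> \<beta> (2*\<beta>)"
    unfolding affine_op_def by blast
  then show False
    using alpha_pos alpha_less_beta by (simp add: clamp_shift_def)
qed

lemma range_diff_clamp_shift: "range (\<lambda>x. x - clamp_shift \<alpha> \<beta> x) = {\<alpha>..\<beta>}"
proof (intro equalityI subsetI)
  fix z
  assume "z \<in> {\<alpha>..\<beta>}"
  then have "z = (if z = \<alpha> then \<alpha> - clamp_shift \<alpha> \<beta> \<alpha> else z - clamp_shift \<alpha> \<beta> z)"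
    by (simp add: clamp_shift_def)
  then show "z \<in> range (\<lambda>x. x - clamp_shift \<alpha> \<beta> x)"
    by (metis rangeI)
qed (use alpha_pos alpha_less_beta in \<open>auto simp: clamp_shift_def\<close>)

lemma min_disp_clamp_shift: "min_disp (clamp_shift \<alpha> \<beta>) = \<alpha>"
  using alpha_pos alpha_less_beta
  by (simp add: min_disp_def range_diff_clamp_shift closest_point_atLeastAtMost_below)

lemma Fix_add_clamp_shift: "Fix (\<lambda>x. \<alpha> + clamp_shift \<alpha> \<beta> x) = {..\<alpha>}"
  using alpha_pos alpha_less_beta by (auto simp: Fix_def clamp_shift_def)

lemma Fix_clamp_shift_translate: "Fix (\<lambda>x. clamp_shift \<alpha> \<beta> (x + \<alpha>)) = {..0}"
  using alpha_pos alpha_less_beta by (auto simp: Fix_def clamp_shift_def)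

lemma funpow_clamp_shift_below: "x \<le> \<alpha> \<Longrightarrow> (clamp_shift \<alpha> \<beta> ^^ n) x + real n * \<alpha> = x"
  using funpow_translate_below[of \<alpha> "clamp_shift \<alpha> \<beta>" \<alpha>] alpha_pos by (simp add: clamp_shift_below)

lemma funpow_clamp_shift_middle:
  assumes "\<alpha> < x" "x \<le> \<beta>" "1 \<le> n"
  shows "(clamp_shift \<alpha> \<beta> ^^ n) x + real n * \<alpha> = \<alpha>"
proof -
  obtain m where n: "n = Suc m"
    using assms(3) by (cases n) auto
  have "(clamp_shift \<alpha> \<beta> ^^ n) x = (clamp_shift \<alpha> \<beta> ^^ m) (clamp_shift \<alpha> \<beta> x)"
    by (simp only: n funpow_Suc_right comp_def)
  also have "\<dots> = (clamp_shift \<alpha> \<beta> ^^ m) 0"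
    using assms by (simp add: clamp_shift_middle)
  finally show ?thesis
    using funpow_clamp_shift_below[of 0 m] alpha_pos by (simp add: n algebra_simps)
qed

lemma funpow_clamp_shift_descent:
  assumes "real n * \<beta> \<le> x"
  shows "(clamp_shift \<alpha> \<beta> ^^ n) x + real n * \<alpha> = x - real n * (\<beta> - \<alpha>)"
  using funpow_translate_above[of \<beta> "clamp_shift \<alpha> \<beta>" n x] assms alpha_pos alpha_less_beta
  by (simp add: clamp_shift_above algebra_simps)

lemma funpow_clamp_shift_le_floor:
  assumes "int n \<le> \<lfloor>x / \<beta>\<rfloor>"
  shows "(clamp_shift \<alpha> \<beta> ^^ n) x + real n * \<alpha> = x - real n * (\<beta> - \<alpha>)"
proof (rule funpow_clamp_shift_descent)
  have "real n * \<beta> \<le> of_int \<lfloor>x / \<beta>\<rfloor> * \<beta>"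
    using assms beta_pos by (intro mult_right_mono) linarith+
  also have "\<dots> \<le> x"
    using beta_pos by (rule floor_divide_lower)
  finally show "real n * \<beta> \<le> x" .
qed

lemma funpow_clamp_shift_gt_floor:
  assumes "0 \<le> x" and "\<lfloor>x / \<beta>\<rfloor> < int n"
  shows "(clamp_shift \<alpha> \<beta> ^^ n) x + real n * \<alpha>
    = min \<alpha> (x - of_int \<lfloor>x / \<beta>\<rfloor> * \<beta>) + of_int \<lfloor>x / \<beta>\<rfloor> * \<alpha>"
proof -
  define k where "k = nat \<lfloor>x / \<beta>\<rfloor>"
  have "0 \<le> \<lfloor>x / \<beta>\<rfloor>"
    using assms(1) beta_pos by simp
  then have k: "real k = of_int \<lfloor>x / \<beta>\<rfloor>" and "k < n"
    using assms(2) by (simp_all add: k_def nat_less_iff)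
  define y where "y = x - real k * \<beta>"
  have "0 \<le> y" and "y < \<beta>"
    using floor_divide_lower[OF beta_pos, of x] floor_divide_upper[OF beta_pos, of x]
    by (simp_all add: y_def k algebra_simps)
  have "(clamp_shift \<alpha> \<beta> ^^ k) x + real k * \<alpha> = y + real k * \<alpha>"
    using funpow_clamp_shift_descent[of k x] \<open>0 \<le> y\<close> by (simp add: y_def algebra_simps)
  then have "(clamp_shift \<alpha> \<beta> ^^ n) x + real n * \<alpha>
      = (clamp_shift \<alpha> \<beta> ^^ (n - k)) y + real (n - k) * \<alpha> + real k * \<alpha>"
    using \<open>k < n\<close> funpow_add[of "n - k" k "clamp_shift \<alpha> \<beta>"]
    by (simp add: of_nat_diff algebra_simps)
  also have "\<dots> = min \<alpha> y + real k * \<alpha>"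
    using funpow_clamp_shift_below[of y "n - k"] funpow_clamp_shift_middle[of y "n - k"]
      \<open>y < \<beta>\<close> \<open>k < n\<close> by (cases "y \<le> \<alpha>") auto
  finally show ?thesis
    by (simp add: y_def k)
qed

lemma funpow_clamp_shift_eventually_limit:
  "\<exists>N. \<forall>n\<ge>N. (clamp_shift \<alpha> \<beta> ^^ n) x + real n * \<alpha> = clamp_shift_limit \<alpha> \<beta> x"
proof (cases "x \<le> \<beta>")
  case True
  then show ?thesis
    using funpow_clamp_shift_below funpow_clamp_shift_middle
    by (intro exI[of _ 1]) (auto simp: clamp_shift_limit_def)
next
  case False
  then show ?thesis
    using alpha_pos alpha_less_beta funpow_clamp_shift_gt_floor[of x]
    by (intro exI[of _ "nat \<lfloor>x / \<beta>\<rfloor> + 1"]) (auto simp: clamp_shift_limit_def algebra_simps)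
qed

lemma clamp_shift_limit_not_Fix:
  assumes "\<beta> < x"
  shows "clamp_shift_limit \<alpha> \<beta> x \<notin> Fix (\<lambda>y. \<alpha> + clamp_shift \<alpha> \<beta> y)"
proof -
  define k where "k = \<lfloor>x / \<beta>\<rfloor>"
  have "1 \<le> x / \<beta>"
    using assms beta_pos by simp
  then have "1 \<le> k"
    unfolding k_def by linarith
  have rest: "0 \<le> x - of_int k * \<beta>"
    using floor_divide_lower[OF beta_pos, of x] by (simp add: k_def)
  have "\<alpha> < min \<alpha> (x - of_int k * \<beta>) + \<alpha> * of_int k"
  proof (cases "k = 1")
    case True
    then show ?thesis
      using assms alpha_pos by simp
  next
    case False
    then have "\<alpha> * 2 \<le> \<alpha> * of_int k"
      using \<open>1 \<le> k\<close> alpha_pos by simp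
    moreover have "0 \<le> min \<alpha> (x - of_int k * \<beta>)"
      using rest alpha_pos by simp
    ultimately show ?thesis
      using alpha_pos by linarith
  qed
  then show ?thesis
    using assms alpha_less_beta
    by (simp add: Fix_add_clamp_shift clamp_shift_limit_def k_def)
qed

end

theorem mainTheorem5:
  fixes \<alpha> \<beta> :: real and T :: "real \<Rightarrow> real"
  assumes "0 < \<alpha>" and "\<alpha> < \<beta>"
    and T_def: "T = (\<lambda>x. if x \<le> \<alpha> then x - \<alpha> else if x \<le> \<beta> then 0 else x - \<beta>)"
  defines "v \<equiv> min_disp T"
  defines "L \<equiv> (\<lambda>x0::real. if x0 \<le> \<alpha> then x0 else if x0 \<le> \<beta> then \<alpha>
                 else min \<alpha> (x0 - of_int \<lfloor>x0 / \<beta>\<rfloor> * \<beta>) + \<alpha> * of_int \<lfloor>x0 / \<beta>\<rfloor>)"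
  shows "firmly_nonexpansive T
    \<and> \<not> affine_op T
    \<and> v = \<alpha>
    \<and> Fix (\<lambda>x. v + T x) = {..\<alpha>}
    \<and> Fix (\<lambda>x. T (x + v)) = {..0}
    \<and> (\<forall>(n::nat) (x::real). n \<ge> 1 \<longrightarrow>
         (x \<le> \<alpha> \<longrightarrow> (T ^^ n) x + real n * v = x)
       \<and> (\<alpha> < x \<and> x \<le> \<beta> \<longrightarrow> (T ^^ n) x + real n * v = \<alpha>)
       \<and> (\<beta> < x \<and> int n \<le> \<lfloor>x / \<beta>\<rfloor> \<longrightarrow> (T ^^ n) x + real n * v = x - real n * (\<beta> - \<alpha>))
       \<and> (\<beta> < x \<and> int n > \<lfloor>x / \<beta>\<rfloor> \<longrightarrow> (T ^^ n) x + real n * v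
              = min \<alpha> (x - of_int \<lfloor>x / \<beta>\<rfloor> * \<beta>) + of_int \<lfloor>x / \<beta>\<rfloor> * \<alpha>))
    \<and> (\<forall>x0::real. (\<exists>N. \<forall>n\<ge>N. (T ^^ n) x0 + real n * v = L x0)
                  \<and> (\<lambda>n. (T ^^ n) x0 + real n * v) \<longlonglongrightarrow> L x0)
    \<and> (\<forall>x0::real. x0 > \<beta> \<longrightarrow> L x0 \<notin> Fix (\<lambda>x. v + T x))"
proof -
  note ab = assms(1,2)
  have T: "T = clamp_shift \<alpha> \<beta>"
    by (simp add: T_def clamp_shift_def fun_eq_iff)
  have v: "v = \<alpha>"
    unfolding v_def T using ab by (rule min_disp_clamp_shift)
  have L: "L = clamp_shift_limit \<alpha> \<beta>"
    by (simp add: L_def clamp_shift_limit_def fun_eq_iff)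
  have "(\<lambda>n. (clamp_shift \<alpha> \<beta> ^^ n) x0 + real n * \<alpha>) \<longlonglongrightarrow> clamp_shift_limit \<alpha> \<beta> x0" for x0
    using funpow_clamp_shift_eventually_limit[OF ab, of x0]
    by (intro tendsto_eventually) (simp add: eventually_sequentially)
  then show ?thesis
    unfolding T v L
    using ab firmly_nonexpansive_clamp_shift[OF ab] not_affine_op_clamp_shift[OF ab]
      Fix_add_clamp_shift[OF ab] Fix_clamp_shift_translate[OF ab]
      funpow_clamp_shift_below[OF ab] funpow_clamp_shift_middle[OF ab]
      funpow_clamp_shift_le_floor[OF ab] funpow_clamp_shift_gt_floor[OF ab]
      funpow_clamp_shift_eventually_limit[OF ab] clamp_shift_limit_not_Fix[OF ab]
    by auto
qed

end
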